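(* Let $R$ be a commutative ring, $s\in R$, and let $A\in M_2(R;s)$ with $A\notin J\big(M_2(R;s)\big)$. If $\det_s(A)\in J(R)$ and $tr(A)\in J(R)$, then $A$ is not strongly $J$-clean in $M_2(R;s)$.
   Context: $J(\cdot)$ denotes the Jacobson radical. For a commutative ring $R$ and $s\in R$, $M_2(R;s)$ denotes the ring whose elements are the $2\times 2$ arrays $\left[\begin{smallmatrix} a&b\\ c&d\end{smallmatrix}\right]$ with $a,b,c,d\in R$, with componentwise addition and multiplication $\left[\begin{smallmatrix} a&b\\ c&d\end{smallmatrix}\right]\left[\begin{smallmatrix} a'&b'\\ c'&d'\end{smallmatrix}\right]=\left[\begin{smallmatrix} aa'+s^2bc'&ab'+bd'\\ ca'+dc'&s^2cb'+dd'\end{smallmatrix}\right]$. For $A=\left[\begin{smallmatrix} a&b\\ c&d\end{smallmatrix}\right]$, $\det_s(A)=ad-s^2bc$ and $tr(A)=a+d$. An element $a$ of a ring $T$ is strongly $J$-clean if there is an idempotent $e\in T$ with $ae=ea$ and $a-e\in J(T)$. *)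

theory Defs
  imports "HOL-Algebra.Ring"
begin

text \<open>Elements of M_2(R;s) are 2x2 arrays [a b; c d], represented as tuples (a,b,c,d).\<close>
type_synonym 'a m2 = "'a \<times> 'a \<times> 'a \<times> 'a"

definition M2s :: "('a, 'b) ring_scheme \<Rightarrow> 'a \<Rightarrow> 'a m2 ring" where
  "M2s R s = \<lparr> carrier = {(a, b, c, d). a \<in> carrier R \<and> b \<in> carrier R \<and> c \<in> carrier R \<and> d \<in> carrier R},
     mult = (\<lambda>(a, b, c, d) (a', b', c', d').
        (a \<otimes>\<^bsub>R\<^esub> a' \<oplus>\<^bsub>R\<^esub> s \<otimes>\<^bsub>R\<^esub> s \<otimes>\<^bsub>R\<^esub> b \<otimes>\<^bsub>R\<^esub> c',
         a \<otimes>\<^bsub>R\<^esub> b' \<oplus>\<^bsub>R\<^esub> b \<otimes>\<^bsub>R\<^esub> d',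
         c \<otimes>\<^bsub>R\<^esub> a' \<oplus>\<^bsub>R\<^esub> d \<otimes>\<^bsub>R\<^esub> c',
         s \<otimes>\<^bsub>R\<^esub> s \<otimes>\<^bsub>R\<^esub> c \<otimes>\<^bsub>R\<^esub> b' \<oplus>\<^bsub>R\<^esub> d \<otimes>\<^bsub>R\<^esub> d')),
     one = (\<one>\<^bsub>R\<^esub>, \<zero>\<^bsub>R\<^esub>, \<zero>\<^bsub>R\<^esub>, \<one>\<^bsub>R\<^esub>),
     zero = (\<zero>\<^bsub>R\<^esub>, \<zero>\<^bsub>R\<^esub>, \<zero>\<^bsub>R\<^esub>, \<zero>\<^bsub>R\<^esub>),
     add = (\<lambda>(a, b, c, d) (a', b', c', d').
        (a \<oplus>\<^bsub>R\<^esub> a', b \<oplus>\<^bsub>R\<^esub> b', c \<oplus>\<^bsub>R\<^esub> c', d \<oplus>\<^bsub>R\<^esub> d')) \<rparr>"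

definition det_s :: "('a, 'b) ring_scheme \<Rightarrow> 'a \<Rightarrow> 'a m2 \<Rightarrow> 'a" where
  "det_s R s A = (case A of (a, b, c, d) \<Rightarrow> a \<otimes>\<^bsub>R\<^esub> d \<ominus>\<^bsub>R\<^esub> s \<otimes>\<^bsub>R\<^esub> s \<otimes>\<^bsub>R\<^esub> b \<otimes>\<^bsub>R\<^esub> c)"

definition tr :: "('a, 'b) ring_scheme \<Rightarrow> 'a m2 \<Rightarrow> 'a" where
  "tr R A = (case A of (a, b, c, d) \<Rightarrow> a \<oplus>\<^bsub>R\<^esub> d)"

definition jacobson :: "('a, 'b) ring_scheme \<Rightarrow> 'a set" where
  "jacobson T = {a \<in> carrier T. \<forall>x \<in> carrier T. \<one>\<^bsub>T\<^esub> \<ominus>\<^bsub>T\<^esub> x \<otimes>\<^bsub>T\<^esub> a \<in> Units T}"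

definition strongly_J_clean :: "('a, 'b) ring_scheme \<Rightarrow> 'a \<Rightarrow> bool" where
  "strongly_J_clean T a = (\<exists>e \<in> carrier T. e \<otimes>\<^bsub>T\<^esub> e = e \<and> a \<otimes>\<^bsub>T\<^esub> e = e \<otimes>\<^bsub>T\<^esub> a
      \<and> a \<ominus>\<^bsub>T\<^esub> e \<in> jacobson T)"

end

theory Submission
  imports Defs
begin

text \<open>By Cayley--Hamilton, \<open>A\<^sup>2 = tr(A)\<cdot>A - det\<^sub>s(A)\<cdot>I\<close>. A scalar matrix \<open>tI\<close> with
  \<open>t \<in> J(R)\<close> lies in \<open>J(M\<^sub>2(R;s))\<close>, since \<open>I - X\<cdot>tI\<close> has \<open>s\<close>-determinant of the form \<open>1 - yt\<close>,
  a unit; hence \<open>A\<^sup>2 \<in> J(M\<^sub>2(R;s))\<close>. In any ring, if \<open>a\<^sup>2 \<in> J\<close> and \<open>a - e \<in> J\<close> for an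
  idempotent \<open>e\<close> commuting with \<open>a\<close>, then \<open>e = a\<^sup>2 - (a + e)(a - e) \<in> J\<close>; an idempotent in
  \<open>J\<close> is \<open>0\<close>, so \<open>a \<in> J\<close>.\<close>

context ring begin

lemma jacobson_closed: "x \<in> jacobson R \<Longrightarrow> x \<in> carrier R"
  by (simp add: jacobson_def)

lemma jacobson_mult_left:
  assumes x: "x \<in> jacobson R" and y: "y \<in> carrier R"
  shows "y \<otimes> x \<in> jacobson R"
proof -
  have "\<one> \<ominus> z \<otimes> (y \<otimes> x) \<in> Units R" if z: "z \<in> carrier R" for z
  proof -
    have "\<one> \<ominus> (z \<otimes> y) \<otimes> x \<in> Units R" using x y z by (simp add: jacobson_def)
    thus ?thesis using jacobson_closed[OF x] y z by (simp add: m_assoc)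
  qed
  thus ?thesis using jacobson_closed[OF x] y by (simp add: jacobson_def)
qed

lemma jacobson_add:
  assumes x: "x \<in> jacobson R" and y: "y \<in> jacobson R"
  shows "x \<oplus> y \<in> jacobson R"
proof -
  have xc: "x \<in> carrier R" and yc: "y \<in> carrier R" using x y by (simp_all add: jacobson_closed)
  have "\<one> \<ominus> z \<otimes> (x \<oplus> y) \<in> Units R" if z: "z \<in> carrier R" for z
  proof -
    have u: "\<one> \<ominus> z \<otimes> x \<in> Units R" using x z by (simp add: jacobson_def)
    define i where "i = inv (\<one> \<ominus> z \<otimes> x)"
    have i: "i \<in> carrier R" "(\<one> \<ominus> z \<otimes> x) \<otimes> i = \<one>" using u by (simp_all add: i_def)
    have v: "\<one> \<ominus> (i \<otimes> z) \<otimes> y \<in> Units R" using y i z by (simp add: jacobson_def)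
    \<comment> \<open>\<open>1 - z(x + y) = (1 - zx)(1 - (1 - zx)\<^sup>-\<^sup>1 z y)\<close>\<close>
    have "(\<one> \<ominus> z \<otimes> x) \<otimes> (\<one> \<ominus> (i \<otimes> z) \<otimes> y)
        = (\<one> \<ominus> z \<otimes> x) \<ominus> ((\<one> \<ominus> z \<otimes> x) \<otimes> i) \<otimes> z \<otimes> y"
      using i(1) z xc yc by (simp add: minus_eq r_distr r_minus m_assoc)
    also have "\<dots> = \<one> \<ominus> z \<otimes> (x \<oplus> y)"
      using z xc yc unfolding i(2) by algebra
    finally show ?thesis using Units_m_closed[OF u v] by simp
  qed
  thus ?thesis using xc yc by (simp add: jacobson_def)
qed

lemma jacobson_uminus:
  assumes "x \<in> jacobson R"
  shows "\<ominus> x \<in> jacobson R"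
proof -
  have "\<ominus> x = (\<ominus> \<one>) \<otimes> x" using assms by (simp add: jacobson_closed l_minus)
  thus ?thesis using jacobson_mult_left[OF assms, of "\<ominus> \<one>"] by simp
qed

lemma jacobson_minus:
  assumes "x \<in> jacobson R" and "y \<in> jacobson R"
  shows "x \<ominus> y \<in> jacobson R"
  using jacobson_add[OF assms(1) jacobson_uminus[OF assms(2)]] by (simp add: minus_eq)

lemma idem_in_jacobson_eq_zero:
  assumes J: "e \<in> jacobson R" and idem: "e \<otimes> e = e"
  shows "e = \<zero>"
proof -
  have e: "e \<in> carrier R" using J by (rule jacobson_closed)
  have "\<forall>x\<in>carrier R. \<one> \<ominus> x \<otimes> e \<in> Units R" using J by (simp add: jacobson_def)
  hence u: "\<one> \<ominus> e \<in> Units R" using e by (metis l_one one_closed)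
  have "e = (inv (\<one> \<ominus> e) \<otimes> (\<one> \<ominus> e)) \<otimes> e" using u e by simp
  also have "\<dots> = inv (\<one> \<ominus> e) \<otimes> (e \<ominus> e \<otimes> e)"
    using u e by (simp add: m_assoc minus_eq l_distr r_distr l_minus r_minus)
  also have "\<dots> = \<zero>" using u e idem by (simp add: r_neg minus_eq)
  finally show ?thesis .
qed

lemma strongly_J_clean_square_jacobson_imp_jacobson:
  assumes clean: "strongly_J_clean R a" and a: "a \<in> carrier R" and sq: "a \<otimes> a \<in> jacobson R"
  shows "a \<in> jacobson R"
proof -
  obtain e where e: "e \<in> carrier R" and idem: "e \<otimes> e = e" and comm: "a \<otimes> e = e \<otimes> a"
    and J: "a \<ominus> e \<in> jacobson R"
    using clean unfolding strongly_J_clean_def by blast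
  have "(a \<oplus> e) \<otimes> (a \<ominus> e) = a \<otimes> a \<ominus> a \<otimes> e \<oplus> e \<otimes> a \<ominus> e \<otimes> e"
    using a e by (simp add: minus_eq l_distr r_distr r_minus minus_add a_assoc a_lcomm)
  also have "\<dots> = a \<otimes> a \<ominus> e" using a e comm idem by (simp add: minus_eq minus_add a_ac r_neg)
  finally have "e = a \<otimes> a \<ominus> (a \<oplus> e) \<otimes> (a \<ominus> e)" using a e by simp algebra
  moreover have "(a \<oplus> e) \<otimes> (a \<ominus> e) \<in> jacobson R" using jacobson_mult_left[OF J] a e by simp
  ultimately have "e \<in> jacobson R" using jacobson_minus[OF sq] by metis
  hence "e = \<zero>" using idem by (rule idem_in_jacobson_eq_zero)
  thus ?thesis using J a by (simp add: minus_eq)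
qed

end

definition m2_scalar :: "('a, 'b) ring_scheme \<Rightarrow> 'a \<Rightarrow> 'a m2" where
  "m2_scalar R t = (t, \<zero>\<^bsub>R\<^esub>, \<zero>\<^bsub>R\<^esub>, t)"

lemma M2s_simps:
  "(a, b, c, d) \<in> carrier (M2s R s) \<longleftrightarrow>
     a \<in> carrier R \<and> b \<in> carrier R \<and> c \<in> carrier R \<and> d \<in> carrier R"
  "(a, b, c, d) \<otimes>\<^bsub>M2s R s\<^esub> (a', b', c', d') =
     (a \<otimes>\<^bsub>R\<^esub> a' \<oplus>\<^bsub>R\<^esub> s \<otimes>\<^bsub>R\<^esub> s \<otimes>\<^bsub>R\<^esub> b \<otimes>\<^bsub>R\<^esub> c',
      a \<otimes>\<^bsub>R\<^esub> b' \<oplus>\<^bsub>R\<^esub> b \<otimes>\<^bsub>R\<^esub> d',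
      c \<otimes>\<^bsub>R\<^esub> a' \<oplus>\<^bsub>R\<^esub> d \<otimes>\<^bsub>R\<^esub> c',
      s \<otimes>\<^bsub>R\<^esub> s \<otimes>\<^bsub>R\<^esub> c \<otimes>\<^bsub>R\<^esub> b' \<oplus>\<^bsub>R\<^esub> d \<otimes>\<^bsub>R\<^esub> d')"
  "(a, b, c, d) \<oplus>\<^bsub>M2s R s\<^esub> (a', b', c', d') =
     (a \<oplus>\<^bsub>R\<^esub> a', b \<oplus>\<^bsub>R\<^esub> b', c \<oplus>\<^bsub>R\<^esub> c', d \<oplus>\<^bsub>R\<^esub> d')"
  "\<one>\<^bsub>M2s R s\<^esub> = (\<one>\<^bsub>R\<^esub>, \<zero>\<^bsub>R\<^esub>, \<zero>\<^bsub>R\<^esub>, \<one>\<^bsub>R\<^esub>)"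
  "\<zero>\<^bsub>M2s R s\<^esub> = (\<zero>\<^bsub>R\<^esub>, \<zero>\<^bsub>R\<^esub>, \<zero>\<^bsub>R\<^esub>, \<zero>\<^bsub>R\<^esub>)"
  by (simp_all add: M2s_def)

lemma ring_M2s:
  assumes "cring R" and s: "s \<in> carrier R"
  shows "ring (M2s R s)"
proof -
  interpret cring R by fact
  show ?thesis
  proof (rule ringI)
    show "abelian_group (M2s R s)"
      by (rule abelian_groupI) (unfold M2s_def, auto simp: a_ac)
    show "monoid (M2s R s)"
      by (rule monoidI) (unfold M2s_def, use s in \<open>(auto; algebra)+\<close>)
  qed (unfold M2s_def, use s in \<open>(auto; algebra)+\<close>)
qed

lemma M2s_minus:
  fixes R (structure)
  assumes "cring R" "s \<in> carrier R"
    and "(a, b, c, d) \<in> carrier (M2s R s)" "(a', b', c', d') \<in> carrier (M2s R s)"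
  shows "(a, b, c, d) \<ominus>\<^bsub>M2s R s\<^esub> (a', b', c', d') =
    (a \<ominus>\<^bsub>R\<^esub> a', b \<ominus>\<^bsub>R\<^esub> b', c \<ominus>\<^bsub>R\<^esub> c', d \<ominus>\<^bsub>R\<^esub> d')"
proof -
  interpret cring R by fact
  interpret M: ring "M2s R s" using assms(1,2) by (rule ring_M2s)
  have "\<ominus>\<^bsub>M2s R s\<^esub> (a', b', c', d') = (\<ominus> a', \<ominus> b', \<ominus> c', \<ominus> d')"
    using assms(4) by (intro M.minus_equality) (auto simp: M2s_simps l_neg)
  thus ?thesis using assms(3,4) by (simp add: a_minus_def M2s_simps)
qed

lemma M2s_Units_if_det_s_Units:
  fixes R (structure)
  assumes "cring R" and s: "s \<in> carrier R" and A: "A \<in> carrier (M2s R s)"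
    and det: "det_s R s A \<in> Units R"
  shows "A \<in> Units (M2s R s)"
proof -
  interpret cring R by fact
  obtain a b c d where A_eq: "A = (a, b, c, d)" by (cases A) auto
  have abcd: "a \<in> carrier R" "b \<in> carrier R" "c \<in> carrier R" "d \<in> carrier R"
    using A by (simp_all add: A_eq M2s_simps)
  define i where "i = inv (det_s R s A)"
  have i: "i \<in> carrier R" "i \<otimes> (a \<otimes> d \<ominus> s \<otimes> s \<otimes> b \<otimes> c) = \<one>"
    using det by (simp_all add: i_def A_eq det_s_def)
  \<comment> \<open>the adjugate scaled by \<open>det\<^sub>s(A)\<^sup>-\<^sup>1\<close>\<close>
  define X where "X = (i \<otimes> d, \<ominus> (i \<otimes> b), \<ominus> (i \<otimes> c), i \<otimes> a)"
  have X: "X \<in> carrier (M2s R s)" using i(1) abcd by (simp add: X_def M2s_simps)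
  define \<delta> where "\<delta> = a \<otimes> d \<ominus> s \<otimes> s \<otimes> b \<otimes> c"
  have "X \<otimes>\<^bsub>M2s R s\<^esub> A = (i \<otimes> \<delta>, \<zero>, \<zero>, i \<otimes> \<delta>)"
    unfolding X_def A_eq \<delta>_def M2s_simps using i(1) abcd s by (intro prod_eqI; simp; algebra)
  moreover have "A \<otimes>\<^bsub>M2s R s\<^esub> X = (i \<otimes> \<delta>, \<zero>, \<zero>, i \<otimes> \<delta>)"
    unfolding X_def A_eq \<delta>_def M2s_simps using i(1) abcd s by (intro prod_eqI; simp; algebra)
  ultimately have "X \<otimes>\<^bsub>M2s R s\<^esub> A = \<one>\<^bsub>M2s R s\<^esub>" "A \<otimes>\<^bsub>M2s R s\<^esub> X = \<one>\<^bsub>M2s R s\<^esub>"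
    using i(2) by (simp_all add: \<delta>_def M2s_simps)
  thus ?thesis using X A unfolding Units_def by blast
qed

lemma m2_scalar_in_jacobson:
  fixes R (structure)
  assumes "cring R" and s: "s \<in> carrier R" and t: "t \<in> jacobson R"
  shows "m2_scalar R t \<in> jacobson (M2s R s)"
proof -
  interpret cring R by fact
  have tc: "t \<in> carrier R" using t by (rule jacobson_closed)
  have "\<one>\<^bsub>M2s R s\<^esub> \<ominus>\<^bsub>M2s R s\<^esub> X \<otimes>\<^bsub>M2s R s\<^esub> m2_scalar R t \<in> Units (M2s R s)"
    if X: "X \<in> carrier (M2s R s)" for X
  proof -
    obtain x1 x2 x3 x4 where X_eq: "X = (x1, x2, x3, x4)" by (cases X) auto
    have x: "x1 \<in> carrier R" "x2 \<in> carrier R" "x3 \<in> carrier R" "x4 \<in> carrier R"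
      using X by (simp_all add: X_eq M2s_simps)
    have "X \<otimes>\<^bsub>M2s R s\<^esub> m2_scalar R t = (x1 \<otimes> t, x2 \<otimes> t, x3 \<otimes> t, x4 \<otimes> t)"
      using x s tc by (simp add: X_eq m2_scalar_def M2s_simps)
    hence diff: "\<one>\<^bsub>M2s R s\<^esub> \<ominus>\<^bsub>M2s R s\<^esub> X \<otimes>\<^bsub>M2s R s\<^esub> m2_scalar R t
        = (\<one> \<ominus> x1 \<otimes> t, \<zero> \<ominus> x2 \<otimes> t, \<zero> \<ominus> x3 \<otimes> t, \<one> \<ominus> x4 \<otimes> t)"
      using x tc by (simp add: M2s_simps(4) M2s_minus[OF assms(1) s] M2s_simps(1))
    define y where "y = x1 \<oplus> x4 \<ominus> t \<otimes> x1 \<otimes> x4 \<oplus> s \<otimes> s \<otimes> t \<otimes> x2 \<otimes> x3"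
    have "det_s R s (\<one> \<ominus> x1 \<otimes> t, \<zero> \<ominus> x2 \<otimes> t, \<zero> \<ominus> x3 \<otimes> t, \<one> \<ominus> x4 \<otimes> t) = \<one> \<ominus> y \<otimes> t"
      unfolding det_s_def y_def using x s tc by simp algebra
    moreover have "\<one> \<ominus> y \<otimes> t \<in> Units R" using t x s tc by (simp add: jacobson_def y_def)
    ultimately show ?thesis
      unfolding diff using x s tc
      by (intro M2s_Units_if_det_s_Units[OF assms(1) s]) (simp_all add: M2s_simps)
  qed
  thus ?thesis using tc by (simp add: jacobson_def m2_scalar_def M2s_simps)
qed

lemma M2s_Cayley_Hamilton:
  fixes R (structure)
  assumes "cring R" and s: "s \<in> carrier R" and A: "A \<in> carrier (M2s R s)"
  shows "A \<otimes>\<^bsub>M2s R s\<^esub> A =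
    A \<otimes>\<^bsub>M2s R s\<^esub> m2_scalar R (tr R A) \<oplus>\<^bsub>M2s R s\<^esub> m2_scalar R (\<ominus> det_s R s A)"
proof -
  interpret cring R by fact
  obtain a b c d where A_eq: "A = (a, b, c, d)" by (cases A) auto
  have "a \<in> carrier R" "b \<in> carrier R" "c \<in> carrier R" "d \<in> carrier R"
    using A by (simp_all add: A_eq M2s_simps)
  thus ?thesis
    unfolding A_eq M2s_simps m2_scalar_def tr_def det_s_def using s
    by (intro prod_eqI; simp; algebra)
qed

theorem proposition3p2:
  fixes R :: "('a, 'b) ring_scheme" and s :: 'a and A :: "'a m2"
  assumes "cring R"
    and "s \<in> carrier R"
    and "A \<in> carrier (M2s R s)"
    and "A \<notin> jacobson (M2s R s)"
    and "det_s R s A \<in> jacobson R"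
    and "tr R A \<in> jacobson R"
  shows "\<not> strongly_J_clean (M2s R s) A"
proof
  assume clean: "strongly_J_clean (M2s R s) A"
  interpret R: cring R by fact
  interpret M: ring "M2s R s" using assms(1,2) by (rule ring_M2s)
  have "m2_scalar R (tr R A) \<in> jacobson (M2s R s)"
    and "m2_scalar R (\<ominus>\<^bsub>R\<^esub> det_s R s A) \<in> jacobson (M2s R s)"
    using assms(5,6) by (simp_all add: m2_scalar_in_jacobson[OF assms(1,2)] R.jacobson_uminus)
  hence "A \<otimes>\<^bsub>M2s R s\<^esub> A \<in> jacobson (M2s R s)"
    unfolding M2s_Cayley_Hamilton[OF assms(1-3)]
    using assms(3) by (simp add: M.jacobson_add M.jacobson_mult_left)
  hence "A \<in> jacobson (M2s R s)"
    using clean assms(3) by (rule M.strongly_J_clean_square_jacobson_imp_jacobson[rotated 2])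
  thus False using assms(4) by contradiction
qed

end
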